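(* Let $E$ be a Banach lattice with an order continuous norm, let $\mathfrak{B}$ be a Boolean subalgebra of $\mathfrak{B}(E)$, let $T\colon E\to E$ be a $\mathfrak{B}$-Volterra operator and let $\xi^1,\xi^2,\xi^3$ be forward filtrations in $\mathfrak{B}$. If $S_1\in\mathcal{L}_T(\xi^1,\xi^2)$ and $S_2\in\mathcal{L}_T(\xi^2,\xi^3)$ then $S_2S_1\in\mathcal{L}_T(\xi^1,\xi^3)$. For every $S\in\mathcal{L}_T(\xi^1,\xi^2)$ there is a norm continuous operator $\hat{L}(S)\in\mathcal{L}_T(L(\xi^1),L(\xi^2))$ such that $\hat{L}(S)\circ\mathbf{s}=\mathbf{s}\circ S$.
   Context: $\mathfrak{B}(E)$ is the Boolean algebra of all order projections on $E$ ($\pi\le\rho$ iff $\pi\rho=\pi$, zero $\mathbf 0$, unit $\mathbf 1=I_E$). A positive operator $T$ is $\mathfrak{B}$-Volterra if for all $\pi\in\mathfrak{B}$, $x,y\in E$, $\pi x=\pi y$ implies $\pi Tx=\pi Ty$. A forward filtration in $\mathfrak{B}$ is a map $\xi\colon\{0,1,\dots,\infty\}\to\mathfrak{B}$ with $\xi_n\le\xi_{n+1}$, $\xi_0=\mathbf 0$, $\xi_\infty=\mathbf 1$; $L(\xi)_0=\xi_0$, $L(\xi)_n=\xi_{n+1}$ ($n\ge1$). $\mathcal{M}_b(\xi)$: sequences $(x_n)_{n\ge1}$ in $E$ with $\xi_nx_m=x_n$ for $m\ge n\ge1$ and $\sup_n\|x_n\|<\infty$; $\mathcal{M}_r(\xi)=\{x^1-x^2:x^i\in\mathcal{M}_b(\xi)^+\}$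 with regular norm $\|x\|_r=\inf\{\sup_n\|y_n\|:y\in\mathcal{M}_b(\xi)^+,\pm x\le y\}$. $\hat{T}_\xi((x_n))=(\xi_nTx_n)$; $\mathbf{s}((x_n)_{n\ge1})=(x_{n+1})_{n\ge1}$ maps $\mathcal{M}_r(\xi)$ to $\mathcal{M}_r(L(\xi))$. $\mathcal{L}_T(\eta^1,\eta^2)$ is the set of norm continuous operators $S\colon\mathcal{M}_r(\eta^1)\to\mathcal{M}_r(\eta^2)$ with $S\circ\hat{T}_{\eta^1}=\hat{T}_{\eta^2}\circ S$. *)

theory Defs
  imports "HOL-Analysis.Analysis" "HOL-Library.Extended_Nat"
begin

text \<open>Banach lattices are modelled as types of sort banach, ordered_real_vector, lattice
  (a complete normed Riesz space) together with the lattice-norm axiom below.\<close>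

definition babs :: "'a::{ab_group_add, lattice} \<Rightarrow> 'a" where
  "babs x = sup x (- x)"

definition banach_lattice :: "'a::{banach, ordered_real_vector, lattice} itself \<Rightarrow> bool" where
  "banach_lattice _ \<longleftrightarrow> (\<forall>x y::'a. babs x \<le> babs y \<longrightarrow> norm x \<le> norm y)"

text \<open>Order continuous norm: every downward directed set (a decreasing net indexed by itself)
  with infimum 0 converges in norm to 0.\<close>
definition order_continuous_norm :: "'a::{banach, ordered_real_vector, lattice} itself \<Rightarrow> bool" where
  "order_continuous_norm _ \<longleftrightarrow>
    (\<forall>D::'a set. D \<noteq> {} \<and> (\<forall>a\<in>D. \<forall>b\<in>D. \<exists>c\<in>D. c \<le> a \<and> c \<le> b)
       \<and> (\<forall>x\<in>D. 0 \<le> x) \<and> (\<forall>z. (\<forall>x\<in>D. z \<le> x) \<longrightarrow> z \<le> 0)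
       \<longrightarrow> (\<forall>e>0. \<exists>x\<in>D. \<forall>y\<in>D. y \<le> x \<longrightarrow> norm y < e))"

definition order_projection :: "('a::{banach, ordered_real_vector, lattice} \<Rightarrow> 'a) \<Rightarrow> bool" where
  "order_projection p \<longleftrightarrow> linear p \<and> p \<circ> p = p \<and> (\<forall>x. 0 \<le> x \<longrightarrow> 0 \<le> p x \<and> p x \<le> x)"

definition proj_le :: "('a \<Rightarrow> 'a) \<Rightarrow> ('a \<Rightarrow> 'a) \<Rightarrow> bool" where
  "proj_le p q \<longleftrightarrow> p \<circ> q = p"

text \<open>Boolean subalgebra of the Boolean algebra of all order projections
  (meet = composition, join = p + q - pq, complement = I - p, zero = 0, unit = I).\<close>
definition boolean_subalgebra :: "(('a::{banach, ordered_real_vector, lattice} \<Rightarrow> 'a)) set \<Rightarrow> bool" where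
  "boolean_subalgebra B \<longleftrightarrow> B \<subseteq> {p. order_projection p} \<and> (\<lambda>x. 0) \<in> B \<and> id \<in> B
     \<and> (\<forall>p\<in>B. \<forall>q\<in>B. p \<circ> q \<in> B \<and> (\<lambda>x. p x + q x - p (q x)) \<in> B)
     \<and> (\<forall>p\<in>B. (\<lambda>x. x - p x) \<in> B)"

definition positive_operator :: "('a::{banach, ordered_real_vector, lattice} \<Rightarrow> 'a) \<Rightarrow> bool" where
  "positive_operator T \<longleftrightarrow> linear T \<and> (\<forall>x. 0 \<le> x \<longrightarrow> 0 \<le> T x)"

definition B_volterra :: "('a::{banach, ordered_real_vector, lattice} \<Rightarrow> 'a) set \<Rightarrow> ('a \<Rightarrow> 'a) \<Rightarrow> bool" where
  "B_volterra B T \<longleftrightarrow> positive_operator T \<and>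
     (\<forall>p\<in>B. \<forall>x y. p x = p y \<longrightarrow> p (T x) = p (T y))"

definition forward_filtration :: "('a::{banach, ordered_real_vector, lattice} \<Rightarrow> 'a) set \<Rightarrow> (enat \<Rightarrow> 'a \<Rightarrow> 'a) \<Rightarrow> bool" where
  "forward_filtration B \<xi> \<longleftrightarrow> (\<forall>n. \<xi> n \<in> B) \<and> (\<forall>n. proj_le (\<xi> n) (\<xi> (n + 1)))
     \<and> \<xi> 0 = (\<lambda>x. 0) \<and> \<xi> \<infinity> = id"

definition Lfilt :: "(enat \<Rightarrow> 'a \<Rightarrow> 'a) \<Rightarrow> enat \<Rightarrow> 'a \<Rightarrow> 'a" where
  "Lfilt \<xi> n = (if n = 0 then \<xi> 0 else \<xi> (n + 1))"

text \<open>Sequences (x_n)_{n\<ge>1} are represented as functions nat \<Rightarrow> 'a with x 0 = 0.\<close>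
definition Mb :: "(enat \<Rightarrow> 'a \<Rightarrow> 'a) \<Rightarrow> (nat \<Rightarrow> 'a::{banach, ordered_real_vector, lattice}) set" where
  "Mb \<xi> = {x. x 0 = 0 \<and> (\<forall>n m. 1 \<le> n \<and> n \<le> m \<longrightarrow> \<xi> (enat n) (x m) = x n)
              \<and> (\<exists>C. \<forall>n\<ge>1. norm (x n) \<le> C)}"

definition Mb_pos :: "(enat \<Rightarrow> 'a \<Rightarrow> 'a) \<Rightarrow> (nat \<Rightarrow> 'a::{banach, ordered_real_vector, lattice}) set" where
  "Mb_pos \<xi> = {x \<in> Mb \<xi>. \<forall>n\<ge>1. 0 \<le> x n}"

definition Mr :: "(enat \<Rightarrow> 'a \<Rightarrow> 'a) \<Rightarrow> (nat \<Rightarrow> 'a::{banach, ordered_real_vector, lattice}) set" where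
  "Mr \<xi> = {x. \<exists>a\<in>Mb_pos \<xi>. \<exists>b\<in>Mb_pos \<xi>. x = (\<lambda>n. a n - b n)}"

definition rnorm :: "(enat \<Rightarrow> 'a \<Rightarrow> 'a) \<Rightarrow> (nat \<Rightarrow> 'a::{banach, ordered_real_vector, lattice}) \<Rightarrow> real" where
  "rnorm \<xi> x = Inf {(SUP n\<in>{1..}. norm (y n)) | y. y \<in> Mb_pos \<xi> \<and> (\<forall>n\<ge>1. x n \<le> y n \<and> - x n \<le> y n)}"

definition That :: "('a \<Rightarrow> 'a) \<Rightarrow> (enat \<Rightarrow> 'a \<Rightarrow> 'a) \<Rightarrow> (nat \<Rightarrow> 'a::zero) \<Rightarrow> nat \<Rightarrow> 'a" where
  "That T \<xi> x = (\<lambda>n. if n = 0 then 0 else \<xi> (enat n) (T (x n)))"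

definition sshift :: "(nat \<Rightarrow> 'a::zero) \<Rightarrow> nat \<Rightarrow> 'a" where
  "sshift x = (\<lambda>n. if n = 0 then 0 else x (Suc n))"

definition LT :: "('a \<Rightarrow> 'a) \<Rightarrow> (enat \<Rightarrow> 'a \<Rightarrow> 'a) \<Rightarrow> (enat \<Rightarrow> 'a \<Rightarrow> 'a)
    \<Rightarrow> ((nat \<Rightarrow> 'a::{banach, ordered_real_vector, lattice}) \<Rightarrow> (nat \<Rightarrow> 'a)) set" where
  "LT T \<eta>1 \<eta>2 = {S. (\<forall>x\<in>Mr \<eta>1. S x \<in> Mr \<eta>2)
     \<and> (\<forall>x\<in>Mr \<eta>1. \<forall>y\<in>Mr \<eta>1. S (\<lambda>n. x n + y n) = (\<lambda>n. S x n + S y n))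
     \<and> (\<forall>c. \<forall>x\<in>Mr \<eta>1. S (\<lambda>n. c *\<^sub>R x n) = (\<lambda>n. c *\<^sub>R S x n))
     \<and> (\<forall>x\<in>Mr \<eta>1. \<forall>e>0. \<exists>d>0. \<forall>y\<in>Mr \<eta>1.
          rnorm \<eta>1 (\<lambda>n. y n - x n) < d \<longrightarrow> rnorm \<eta>2 (\<lambda>n. S y n - S x n) < e)
     \<and> (\<forall>x\<in>Mr \<eta>1. S (That T \<eta>1 x) = That T \<eta>2 (S x))}"

end

(*
  All defining properties of LT_T (linearity, continuity for the regular norms, commuting
  with the T-hat operators) survive composition, which gives the first claim.

  For the second, the shift s = (x_n) |-> (x_(n+1)) lies in LT_T(xi, L(xi)) and has the
  left inverse u = (x_1, x_2, ...) |-> (xi_1 x_1, x_1, x_2, ...) in LT_T(L(xi), xi).  Both act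
  coordinatewise through order projections, hence preserve the dominating sequences in the
  definition of the regular norm without increasing their sup norms, so they are contractions;
  u commutes with the T-hat operators because T is Volterra with respect to xi_1.  Hence
  L(S) = s S u lies in LT_T(L(xi1), L(xi2)) by the first claim, and L(S) s = s S since u s = id.
*)

theory Submission
  imports Defs
begin

section \<open>Order projections and filtrations\<close>

lemma order_projection_linear: "order_projection p \<Longrightarrow> linear p"
  by (simp add: order_projection_def)

lemma order_projection_idem: "order_projection p \<Longrightarrow> p (p x) = p x"
  unfolding order_projection_def by (metis comp_apply)

lemma order_projection_nonneg: "order_projection p \<Longrightarrow> 0 \<le> x \<Longrightarrow> 0 \<le> p x"
  by (simp add: order_projection_def)

lemma order_projection_mono:
  assumes p: "order_projection p" and "a \<le> b"
  shows "p a \<le> p b"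
proof -
  have "0 \<le> p (b - a)" using order_projection_nonneg[OF p] \<open>a \<le> b\<close> by simp
  then show ?thesis by (simp add: linear_diff[OF order_projection_linear[OF p]])
qed

lemma order_projection_id: "order_projection id"
  by (simp add: order_projection_def linear_id)

lemma norm_order_projection_le:
  assumes "banach_lattice TYPE('a::{banach, ordered_real_vector, lattice})"
    and "order_projection (p :: 'a \<Rightarrow> 'a)" and "0 \<le> x"
  shows "norm (p x) \<le> norm x"
proof -
  have "0 \<le> p x" "p x \<le> x" using assms(2,3) by (auto simp: order_projection_def)
  then have "babs (p x) \<le> babs x"
    using \<open>0 \<le> x\<close> by (simp add: babs_def sup_absorb1 order_trans[of "- _" 0])
  then show ?thesis using assms(1) unfolding banach_lattice_def by blast
qed

lemma forward_filtration_order_projection: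
  "boolean_subalgebra B \<Longrightarrow> forward_filtration B \<xi> \<Longrightarrow> order_projection (\<xi> n)"
  unfolding boolean_subalgebra_def forward_filtration_def by blast

lemma forward_filtration_absorb_Suc:
  assumes "forward_filtration B \<xi>"
  shows "\<xi> (enat n) (\<xi> (enat (Suc n)) x) = \<xi> (enat n) x"
proof -
  have "\<xi> (enat n) \<circ> \<xi> (enat n + 1) = \<xi> (enat n)"
    using assms by (simp add: forward_filtration_def proj_le_def)
  then show ?thesis by (metis comp_apply eSuc_enat plus_1_eSuc(2))
qed

lemma Lfilt_enat: "1 \<le> n \<Longrightarrow> Lfilt \<xi> (enat n) = \<xi> (enat (Suc n))"
  unfolding Lfilt_def by (simp add: plus_1_eSuc eSuc_enat enat_0_iff)

lemma Lfilt_order_projection: "(\<And>n. order_projection (\<xi> n)) \<Longrightarrow> order_projection (Lfilt \<xi> n)"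
  by (simp add: Lfilt_def)

section \<open>Sequence spaces and the regular norm\<close>

definition dominates :: "(nat \<Rightarrow> 'a::ordered_ab_group_add) \<Rightarrow> (nat \<Rightarrow> 'a) \<Rightarrow> bool" where
  "dominates w x \<longleftrightarrow> (\<forall>n\<ge>1. x n \<le> w n \<and> - x n \<le> w n)"

definition sup_norm :: "(nat \<Rightarrow> 'a::real_normed_vector) \<Rightarrow> real" where
  "sup_norm w = (SUP n\<in>{1..}. norm (w n))"

lemma rnorm_eq_Inf_sup_norm: "rnorm \<eta> x = Inf {sup_norm w | w. w \<in> Mb_pos \<eta> \<and> dominates w x}"
  by (simp add: rnorm_def sup_norm_def dominates_def)

lemma Mb_adapted: "x \<in> Mb \<eta> \<Longrightarrow> 1 \<le> n \<Longrightarrow> n \<le> m \<Longrightarrow> \<eta> (enat n) (x m) = x n"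
  by (simp add: Mb_def)

lemma Mb_pos_nonneg: "x \<in> Mb_pos \<eta> \<Longrightarrow> 1 \<le> n \<Longrightarrow> 0 \<le> x n"
  by (simp add: Mb_pos_def)

lemma Mb_bdd_above_norm: "x \<in> Mb \<eta> \<Longrightarrow> bdd_above ((\<lambda>n. norm (x n)) ` {1..})"
  unfolding Mb_def bdd_above_def by auto

lemma norm_le_sup_norm: "x \<in> Mb \<eta> \<Longrightarrow> 1 \<le> n \<Longrightarrow> norm (x n) \<le> sup_norm x"
  unfolding sup_norm_def by (rule cSUP_upper[OF _ Mb_bdd_above_norm]) auto

lemma sup_norm_nonneg: "x \<in> Mb \<eta> \<Longrightarrow> 0 \<le> sup_norm x"
  using norm_le_sup_norm[of x \<eta> 1] norm_ge_zero[of "x 1"] by linarith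

lemma Mb_pos_add:
  assumes "\<And>n. linear (\<eta> n)" and a: "a \<in> Mb_pos \<eta>" and b: "b \<in> Mb_pos \<eta>"
  shows "(\<lambda>n. a n + b n) \<in> Mb_pos \<eta>"
proof -
  obtain Ca Cb where "\<forall>n\<ge>1. norm (a n) \<le> Ca" "\<forall>n\<ge>1. norm (b n) \<le> Cb"
    using a b unfolding Mb_pos_def Mb_def by blast
  then have "\<forall>n\<ge>1. norm (a n + b n) \<le> Ca + Cb"
    by (meson add_mono norm_triangle_ineq order_trans)
  moreover have "\<eta> (enat n) (a m + b m) = a n + b n" if "1 \<le> n" "n \<le> m" for n m
    using a b that by (simp add: linear_add[OF assms(1)] Mb_pos_def Mb_adapted)
  moreover have "0 \<le> a n + b n" if "1 \<le> n" for n
    using Mb_pos_nonneg[OF a that] Mb_pos_nonneg[OF b that] by simp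
  moreover have "a 0 + b 0 = 0" using a b by (simp add: Mb_pos_def Mb_def)
  ultimately show ?thesis unfolding Mb_pos_def Mb_def by auto
qed

lemma Mr_adapted:
  assumes "\<And>n. linear (\<eta> n)" and "x \<in> Mr \<eta>" and "1 \<le> n" "n \<le> m"
  shows "\<eta> (enat n) (x m) = x n"
  using assms(2-4) by (auto simp: linear_diff[OF assms(1)] Mr_def Mb_pos_def Mb_def)

lemma Mr_zero: "x \<in> Mr \<eta> \<Longrightarrow> x 0 = 0"
  unfolding Mr_def Mb_pos_def Mb_def by auto

lemma Mr_diff:
  assumes "\<And>n. linear (\<eta> n)" and "x \<in> Mr \<eta>" and "y \<in> Mr \<eta>"
  shows "(\<lambda>n. x n - y n) \<in> Mr \<eta>"
proof -
  obtain a b c d where ab: "a \<in> Mb_pos \<eta>" "b \<in> Mb_pos \<eta>" "x = (\<lambda>n. a n - b n)"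
    and cd: "c \<in> Mb_pos \<eta>" "d \<in> Mb_pos \<eta>" "y = (\<lambda>n. c n - d n)"
    using assms(2,3) unfolding Mr_def by blast
  have "(\<lambda>n. x n - y n) = (\<lambda>n. (a n + d n) - (b n + c n))"
    unfolding ab(3) cd(3) by (simp add: algebra_simps)
  moreover have "(\<lambda>n. a n + d n) \<in> Mb_pos \<eta>" "(\<lambda>n. b n + c n) \<in> Mb_pos \<eta>"
    using ab cd by (simp_all add: Mb_pos_add[of \<eta>, OF assms(1)])
  ultimately show ?thesis unfolding Mr_def by auto
qed

lemma Mr_dominated:
  assumes "\<And>n. linear (\<eta> n)" and "x \<in> Mr \<eta>"
  obtains w where "w \<in> Mb_pos \<eta>" "dominates w x"
proof -
  obtain a b where a: "a \<in> Mb_pos \<eta>" and b: "b \<in> Mb_pos \<eta>" and x: "x = (\<lambda>n. a n - b n)"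
    using assms(2) unfolding Mr_def by blast
  have "a n + - b n \<le> a n + b n \<and> - a n + b n \<le> a n + b n" if "1 \<le> n" for n
    using Mb_pos_nonneg[OF a that] Mb_pos_nonneg[OF b that]
    by (auto intro!: add_left_mono add_right_mono intro: order_trans[of _ 0])
  then have "dominates (\<lambda>n. a n + b n) x"
    unfolding dominates_def x by simp
  with Mb_pos_add[of \<eta>, OF assms(1) a b] show ?thesis by (rule that)
qed

lemma rnorm_le_rnorm:
  assumes "\<And>n. linear (\<eta> n)" and "x \<in> Mr \<eta>"
    and "\<And>w. w \<in> Mb_pos \<eta> \<Longrightarrow> dominates w x \<Longrightarrow>
      \<exists>w'\<in>Mb_pos \<eta>'. dominates w' x' \<and> sup_norm w' \<le> sup_norm w"
  shows "rnorm \<eta>' x' \<le> rnorm \<eta> x"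
  unfolding rnorm_eq_Inf_sup_norm
proof (rule cInf_mono)
  obtain w where "w \<in> Mb_pos \<eta>" "dominates w x" using Mr_dominated[of \<eta>, OF assms(1,2)] .
  then show "{sup_norm w | w. w \<in> Mb_pos \<eta> \<and> dominates w x} \<noteq> {}" by blast
  show "bdd_below {sup_norm w | w. w \<in> Mb_pos \<eta>' \<and> dominates w x'}"
    by (rule bdd_belowI[of _ 0]) (auto simp: Mb_pos_def intro: sup_norm_nonneg)
  show "\<exists>a\<in>{sup_norm w | w. w \<in> Mb_pos \<eta>' \<and> dominates w x'}. a \<le> b"
    if b: "b \<in> {sup_norm w | w. w \<in> Mb_pos \<eta> \<and> dominates w x}" for b
  proof -
    obtain w where "w \<in> Mb_pos \<eta>" "dominates w x" "b = sup_norm w" using b by blast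
    then obtain w' where "w' \<in> Mb_pos \<eta>'" "dominates w' x'" "sup_norm w' \<le> b"
      using assms(3) by blast
    then show ?thesis by blast
  qed
qed

section \<open>The operator classes \<open>LT\<close>\<close>

lemma LT_comp:
  assumes S1: "S1 \<in> LT T \<eta>1 \<eta>2" and S2: "S2 \<in> LT T \<eta>2 \<eta>3"
  shows "S2 \<circ> S1 \<in> LT T \<eta>1 \<eta>3"
proof -
  have maps: "S1 x \<in> Mr \<eta>2" if "x \<in> Mr \<eta>1" for x
    using S1 that by (simp add: LT_def)
  have "\<exists>d>0. \<forall>y\<in>Mr \<eta>1. rnorm \<eta>1 (\<lambda>n. y n - x n) < d \<longrightarrow>
      rnorm \<eta>3 (\<lambda>n. S2 (S1 y) n - S2 (S1 x) n) < e"
    if x: "x \<in> Mr \<eta>1" and "e > 0" for x e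
  proof -
    obtain d2 where "d2 > 0" and d2: "\<forall>z\<in>Mr \<eta>2. rnorm \<eta>2 (\<lambda>n. z n - S1 x n) < d2 \<longrightarrow>
        rnorm \<eta>3 (\<lambda>n. S2 z n - S2 (S1 x) n) < e"
      using S2 maps[OF x] \<open>e > 0\<close> unfolding LT_def by blast
    obtain d1 where "d1 > 0" and d1: "\<forall>y\<in>Mr \<eta>1. rnorm \<eta>1 (\<lambda>n. y n - x n) < d1 \<longrightarrow>
        rnorm \<eta>2 (\<lambda>n. S1 y n - S1 x n) < d2"
      using S1 x \<open>d2 > 0\<close> unfolding LT_def by blast
    show ?thesis using \<open>d1 > 0\<close> d1 d2 maps by blast
  qed
  then show ?thesis using S1 S2 maps unfolding LT_def by simp
qed

lemma LT_if_rnorm_contraction: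
  assumes "\<And>n. linear (\<eta> n)"
    and maps: "\<And>x. x \<in> Mr \<eta> \<Longrightarrow> \<Phi> x \<in> Mr \<eta>'"
    and add: "\<And>x y. \<Phi> (\<lambda>n. x n + y n) = (\<lambda>n. \<Phi> x n + \<Phi> y n)"
    and scale: "\<And>c x. \<Phi> (\<lambda>n. c *\<^sub>R x n) = (\<lambda>n. c *\<^sub>R \<Phi> x n)"
    and contraction: "\<And>x. x \<in> Mr \<eta> \<Longrightarrow> rnorm \<eta>' (\<Phi> x) \<le> rnorm \<eta> x"
    and That: "\<And>x. x \<in> Mr \<eta> \<Longrightarrow> \<Phi> (That T \<eta> x) = That T \<eta>' (\<Phi> x)"
  shows "\<Phi> \<in> LT T \<eta> \<eta>'"
proof -
  have diff: "\<Phi> (\<lambda>n. y n - x n) = (\<lambda>n. \<Phi> y n - \<Phi> x n)" for x y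
    using add[of y "\<lambda>n. (- 1) *\<^sub>R x n"] scale[of "- 1" x] by simp
  have "rnorm \<eta>' (\<lambda>n. \<Phi> y n - \<Phi> x n) < e"
    if "x \<in> Mr \<eta>" "y \<in> Mr \<eta>" "rnorm \<eta> (\<lambda>n. y n - x n) < e" for x y e
    using contraction[OF Mr_diff[of \<eta>, OF assms(1) that(2,1)]] that(3) by (simp add: diff)
  then show ?thesis
    using maps add scale That unfolding LT_def by blast
qed

section \<open>Reindexing sequences through order projections\<close>

definition proj_reindex :: "(nat \<Rightarrow> 'a \<Rightarrow> 'a) \<Rightarrow> (nat \<Rightarrow> nat) \<Rightarrow> (nat \<Rightarrow> 'a::zero) \<Rightarrow> nat \<Rightarrow> 'a" where
  "proj_reindex P \<sigma> x n = (if n = 0 then 0 else P n (x (\<sigma> n)))"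

lemma proj_reindex_add:
  "(\<And>n. linear (P n)) \<Longrightarrow>
    proj_reindex P \<sigma> (\<lambda>n. x n + y n) = (\<lambda>n. proj_reindex P \<sigma> x n + proj_reindex P \<sigma> y n)"
  by (simp add: proj_reindex_def linear_add fun_eq_iff)

lemma proj_reindex_diff:
  "(\<And>n. linear (P n)) \<Longrightarrow>
    proj_reindex P \<sigma> (\<lambda>n. x n - y n) = (\<lambda>n. proj_reindex P \<sigma> x n - proj_reindex P \<sigma> y n)"
  by (simp add: proj_reindex_def linear_diff fun_eq_iff)

lemma proj_reindex_scale:
  "(\<And>n. linear (P n)) \<Longrightarrow>
    proj_reindex P \<sigma> (\<lambda>n. c *\<^sub>R x n) = (\<lambda>n. c *\<^sub>R proj_reindex P \<sigma> x n)"
  by (simp add: proj_reindex_def linear_scale fun_eq_iff)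

lemma proj_reindex_dominates:
  assumes P: "\<And>n. order_projection (P n)" and \<sigma>: "\<And>n. 1 \<le> n \<Longrightarrow> 1 \<le> \<sigma> n"
    and "dominates w x"
  shows "dominates (proj_reindex P \<sigma> w) (proj_reindex P \<sigma> x)"
  unfolding dominates_def
proof (intro allI impI)
  fix n :: nat assume n: "1 \<le> n"
  then have "x (\<sigma> n) \<le> w (\<sigma> n)" "- x (\<sigma> n) \<le> w (\<sigma> n)"
    using \<sigma>[OF n] \<open>dominates w x\<close> by (auto simp: dominates_def)
  then have "P n (x (\<sigma> n)) \<le> P n (w (\<sigma> n))" "- P n (x (\<sigma> n)) \<le> P n (w (\<sigma> n))"
    using order_projection_mono[OF P]
    by (auto simp flip: linear_neg[OF order_projection_linear[OF P]])
  then show "proj_reindex P \<sigma> x n \<le> proj_reindex P \<sigma> w n \<and> - proj_reindex P \<sigma> x n \<le> proj_reindex P \<sigma> w n"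
    using n by (simp add: proj_reindex_def)
qed

lemma sup_norm_proj_reindex_le:
  assumes contr: "\<And>n x. 0 \<le> x \<Longrightarrow> norm (P n x) \<le> norm x" and \<sigma>: "\<And>n. 1 \<le> n \<Longrightarrow> 1 \<le> \<sigma> n"
    and w: "w \<in> Mb_pos \<eta>"
  shows "sup_norm (proj_reindex P \<sigma> w) \<le> sup_norm w"
  unfolding sup_norm_def
proof (rule cSUP_mono)
  show "bdd_above ((\<lambda>n. norm (w n)) ` {1..})"
    by (rule Mb_bdd_above_norm[of _ \<eta>]) (use w in \<open>simp add: Mb_pos_def\<close>)
  show "\<exists>m\<in>{1..}. norm (proj_reindex P \<sigma> w n) \<le> norm (w m)" if "n \<in> {1..}" for n
  proof
    have "1 \<le> n" "1 \<le> \<sigma> n" using that \<sigma> by auto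
    with contr Mb_pos_nonneg[OF w] show "norm (proj_reindex P \<sigma> w n) \<le> norm (w (\<sigma> n))"
      by (simp add: proj_reindex_def)
  qed (use that \<sigma> in auto)
qed simp

lemma proj_reindex_Mb_pos:
  assumes P: "\<And>n. order_projection (P n)" and contr: "\<And>n x. 0 \<le> x \<Longrightarrow> norm (P n x) \<le> norm x"
    and \<sigma>: "\<And>n. 1 \<le> n \<Longrightarrow> 1 \<le> \<sigma> n" and w: "w \<in> Mb_pos \<eta>"
    and adapted: "\<And>n m. 1 \<le> n \<Longrightarrow> n \<le> m \<Longrightarrow>
      \<eta>' (enat n) (proj_reindex P \<sigma> w m) = proj_reindex P \<sigma> w n"
  shows "proj_reindex P \<sigma> w \<in> Mb_pos \<eta>'"
proof -
  have wMb: "w \<in> Mb \<eta>" using w by (simp add: Mb_pos_def)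
  have "norm (proj_reindex P \<sigma> w n) \<le> sup_norm w" if "1 \<le> n" for n
  proof -
    have "norm (P n (w (\<sigma> n))) \<le> norm (w (\<sigma> n))"
      using contr Mb_pos_nonneg[OF w \<sigma>[OF that]] by blast
    then show ?thesis
      using norm_le_sup_norm[OF wMb \<sigma>[OF that]] that by (simp add: proj_reindex_def)
  qed
  moreover have "0 \<le> proj_reindex P \<sigma> w n" if "1 \<le> n" for n
    using order_projection_nonneg[OF P Mb_pos_nonneg[OF w \<sigma>[OF that]]] that
    by (simp add: proj_reindex_def)
  ultimately show ?thesis
    using adapted by (auto simp: Mb_pos_def Mb_def proj_reindex_def[of _ _ _ 0])
qed

lemma proj_reindex_Mr:
  assumes "\<And>n. linear (P n)" and Mb_pos: "\<And>w. w \<in> Mb_pos \<eta> \<Longrightarrow> proj_reindex P \<sigma> w \<in> Mb_pos \<eta>'"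
    and "x \<in> Mr \<eta>"
  shows "proj_reindex P \<sigma> x \<in> Mr \<eta>'"
proof -
  obtain a b where "a \<in> Mb_pos \<eta>" "b \<in> Mb_pos \<eta>" "x = (\<lambda>n. a n - b n)"
    using \<open>x \<in> Mr \<eta>\<close> unfolding Mr_def by blast
  then show ?thesis
    using Mb_pos by (auto simp: Mr_def proj_reindex_diff[of P, OF assms(1)])
qed

lemma proj_reindex_in_LT:
  assumes P: "\<And>n. order_projection (P n)" and contr: "\<And>n x. 0 \<le> x \<Longrightarrow> norm (P n x) \<le> norm x"
    and \<sigma>: "\<And>n. 1 \<le> n \<Longrightarrow> 1 \<le> \<sigma> n" and \<eta>: "\<And>n. linear (\<eta> n)"
    and Mb_pos: "\<And>w. w \<in> Mb_pos \<eta> \<Longrightarrow> proj_reindex P \<sigma> w \<in> Mb_pos \<eta>'"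
    and That: "\<And>x. x \<in> Mr \<eta> \<Longrightarrow> proj_reindex P \<sigma> (That T \<eta> x) = That T \<eta>' (proj_reindex P \<sigma> x)"
  shows "proj_reindex P \<sigma> \<in> LT T \<eta> \<eta>'"
proof (rule LT_if_rnorm_contraction[where \<eta> = \<eta>])
  show "linear (\<eta> n)" for n by (rule \<eta>)
  show "proj_reindex P \<sigma> (That T \<eta> x) = That T \<eta>' (proj_reindex P \<sigma> x)" if "x \<in> Mr \<eta>" for x
    using That[OF that] .
  have P_linear: "\<And>n. linear (P n)" using P by (rule order_projection_linear)
  show "proj_reindex P \<sigma> x \<in> Mr \<eta>'" if "x \<in> Mr \<eta>" for x
    using proj_reindex_Mr[of P, OF P_linear Mb_pos that] .
  show "proj_reindex P \<sigma> (\<lambda>n. x n + y n) = (\<lambda>n. proj_reindex P \<sigma> x n + proj_reindex P \<sigma> y n)" for x y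
    by (rule proj_reindex_add[of P, OF P_linear])
  show "proj_reindex P \<sigma> (\<lambda>n. c *\<^sub>R x n) = (\<lambda>n. c *\<^sub>R proj_reindex P \<sigma> x n)" for c x
    by (rule proj_reindex_scale[of P, OF P_linear])
  show "rnorm \<eta>' (proj_reindex P \<sigma> x) \<le> rnorm \<eta> x" if "x \<in> Mr \<eta>" for x
  proof (rule rnorm_le_rnorm[of \<eta>, OF \<eta> that])
    fix w assume "w \<in> Mb_pos \<eta>" "dominates w x"
    then show "\<exists>w'\<in>Mb_pos \<eta>'. dominates w' (proj_reindex P \<sigma> x) \<and> sup_norm w' \<le> sup_norm w"
      using Mb_pos proj_reindex_dominates[of P \<sigma>, OF P \<sigma>]
        sup_norm_proj_reindex_le[of P \<sigma>, OF contr \<sigma>] by blast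
  qed
qed

section \<open>The shift and its left inverse\<close>

lemma sshift_eq_proj_reindex: "sshift = proj_reindex (\<lambda>_. id) Suc"
  by (simp add: sshift_def proj_reindex_def fun_eq_iff)

lemma sshift_That: "sshift (That T \<xi> x) = That T (Lfilt \<xi>) (sshift x)"
  by (simp add: sshift_def That_def Lfilt_enat fun_eq_iff)

lemma sshift_in_LT:
  assumes "\<And>n. linear (\<xi> n)"
  shows "sshift \<in> LT T \<xi> (Lfilt \<xi>)"
  unfolding sshift_eq_proj_reindex
proof (rule proj_reindex_in_LT[where \<eta> = \<xi>])
  show "proj_reindex (\<lambda>_. id) Suc w \<in> Mb_pos (Lfilt \<xi>)" if w: "w \<in> Mb_pos \<xi>" for w
  proof (rule proj_reindex_Mb_pos[OF order_projection_id _ _ w])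
    show "Lfilt \<xi> (enat n) (proj_reindex (\<lambda>_. id) Suc w m) = proj_reindex (\<lambda>_. id) Suc w n"
      if "1 \<le> n" "n \<le> m" for n m
      using w that by (simp add: proj_reindex_def Lfilt_enat Mb_pos_def Mb_adapted)
  qed simp_all
  show "proj_reindex (\<lambda>_. id) Suc (That T \<xi> x) = That T (Lfilt \<xi>) (proj_reindex (\<lambda>_. id) Suc x)"
    for x using sshift_That unfolding sshift_eq_proj_reindex .
qed (simp_all add: assms order_projection_id)

definition unshift :: "(enat \<Rightarrow> 'a \<Rightarrow> 'a) \<Rightarrow> (nat \<Rightarrow> 'a::zero) \<Rightarrow> nat \<Rightarrow> 'a" where
  "unshift \<xi> = proj_reindex (\<lambda>n. if n = 1 then \<xi> (enat 1) else id) (\<lambda>n. max 1 (n - 1))"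

lemma unshift_simps [simp]:
  "unshift \<xi> x 0 = 0"
  "unshift \<xi> x (Suc 0) = \<xi> (enat 1) (x 1)"
  "unshift \<xi> x (Suc (Suc n)) = x (Suc n)"
  by (simp_all add: unshift_def proj_reindex_def)

lemma nat_cases_0_1_SucSuc:
  obtains "n = 0" | "n = 1" | k where "n = Suc (Suc k)"
  by (metis One_nat_def not0_implies_Suc)

lemma unshift_sshift:
  assumes "\<And>n. linear (\<xi> n)" and x: "x \<in> Mr \<xi>"
  shows "unshift \<xi> (sshift x) = x"
proof
  fix n :: nat
  show "unshift \<xi> (sshift x) n = x n"
    using Mr_zero[OF x] Mr_adapted[of \<xi>, OF assms(1) x, of 1 2]
    by (cases n rule: nat_cases_0_1_SucSuc) (simp_all add: sshift_def numeral_2_eq_2)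
qed

lemma unshift_Mb_pos:
  assumes BL: "banach_lattice TYPE('a::{banach, ordered_real_vector, lattice})"
    and OP: "\<And>n. order_projection (\<xi> n)" and FF: "forward_filtration B \<xi>"
    and w: "(w :: nat \<Rightarrow> 'a) \<in> Mb_pos (Lfilt \<xi>)"
  shows "unshift \<xi> w \<in> Mb_pos \<xi>"
  unfolding unshift_def
proof (rule proj_reindex_Mb_pos[OF _ _ _ w])
  show "order_projection (if n = 1 then \<xi> (enat 1) else id)" for n
    by (simp add: OP order_projection_id)
  then show "norm ((if n = 1 then \<xi> (enat 1) else id) x) \<le> norm x" if "0 \<le> x" for n x
    using norm_order_projection_le[OF BL _ that] by blast
  have w_adapted: "\<xi> (enat (Suc n)) (w m) = w n" if "1 \<le> n" "n \<le> m" for n m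
    using w that by (simp add: Mb_pos_def Mb_adapted flip: Lfilt_enat)
  have "\<xi> (enat n) (unshift \<xi> w m) = unshift \<xi> w n" if "1 \<le> n" "n \<le> m" for n m
  proof (cases m rule: nat_cases_0_1_SucSuc)
    case 2
    with that show ?thesis by (simp add: order_projection_idem[OF OP])
  next
    case (3 k)
    show ?thesis
    proof (cases n rule: nat_cases_0_1_SucSuc)
      case 2
      have "\<xi> (enat 1) (w (Suc k)) = \<xi> (enat 1) (\<xi> (enat 2) (w (Suc k)))"
        using forward_filtration_absorb_Suc[OF FF, of 1] by (simp add: numeral_2_eq_2)
      also have "\<dots> = \<xi> (enat 1) (w 1)"
        using w_adapted[of 1 "Suc k"] by (simp add: numeral_2_eq_2)
      finally show ?thesis using 2 3 by simp
    qed (use that 3 w_adapted in auto)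
  qed (use that in auto)
  then show "\<xi> (enat n) (proj_reindex (\<lambda>n. if n = 1 then \<xi> (enat 1) else id) (\<lambda>n. max 1 (n - 1)) w m) =
      proj_reindex (\<lambda>n. if n = 1 then \<xi> (enat 1) else id) (\<lambda>n. max 1 (n - 1)) w n"
    if "1 \<le> n" "n \<le> m" for n m
    using that unfolding unshift_def by blast
qed simp

lemma unshift_That:
  assumes OP: "\<And>n. order_projection (\<xi> n)" and FF: "forward_filtration B \<xi>"
    and V: "B_volterra B T"
  shows "unshift \<xi> (That T (Lfilt \<xi>) y) = That T \<xi> (unshift \<xi> y)"
proof
  fix n :: nat
  have "\<xi> (enat 1) (T (y 1)) = \<xi> (enat 1) (T (\<xi> (enat 1) (y 1)))"
    using V FF order_projection_idem[OF OP]
    unfolding B_volterra_def forward_filtration_def by metis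
  moreover have "\<xi> (enat 1) (\<xi> (enat 2) z) = \<xi> (enat 1) z" for z
    using forward_filtration_absorb_Suc[OF FF, of 1] by (simp add: numeral_2_eq_2)
  ultimately show "unshift \<xi> (That T (Lfilt \<xi>) y) n = That T \<xi> (unshift \<xi> y) n"
    by (cases n rule: nat_cases_0_1_SucSuc) (simp_all add: That_def Lfilt_enat numeral_2_eq_2)
qed

lemma unshift_in_LT:
  assumes BL: "banach_lattice TYPE('a::{banach, ordered_real_vector, lattice})"
    and OP: "\<And>n. order_projection (\<xi> n)" and FF: "forward_filtration B \<xi>"
    and V: "B_volterra B (T :: 'a \<Rightarrow> 'a)"
  shows "unshift \<xi> \<in> LT T (Lfilt \<xi>) \<xi>"
  unfolding unshift_def
proof (rule proj_reindex_in_LT[where \<eta> = "Lfilt \<xi>"])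
  show "order_projection (if n = 1 then \<xi> (enat 1) else id)" for n
    by (simp add: OP order_projection_id)
  then show "norm ((if n = 1 then \<xi> (enat 1) else id) x) \<le> norm x" if "0 \<le> x" for n x
    using norm_order_projection_le[OF BL _ that] by blast
  show "linear (Lfilt \<xi> n)" for n
    by (rule order_projection_linear[OF Lfilt_order_projection[OF OP]])
qed (use unshift_Mb_pos[OF BL OP FF] unshift_That[OF OP FF V] in \<open>simp_all add: unshift_def\<close>)

theorem proposition4p17:
  fixes T :: "'a::{banach, ordered_real_vector, lattice} \<Rightarrow> 'a"
    and B :: "('a \<Rightarrow> 'a) set"
    and \<xi>1 \<xi>2 \<xi>3 :: "enat \<Rightarrow> 'a \<Rightarrow> 'a"
  assumes "banach_lattice TYPE('a)"
    and "order_continuous_norm TYPE('a)"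
    and "boolean_subalgebra B"
    and "B_volterra B T"
    and "forward_filtration B \<xi>1"
    and "forward_filtration B \<xi>2"
    and "forward_filtration B \<xi>3"
  shows "(\<forall>S1 S2. S1 \<in> LT T \<xi>1 \<xi>2 \<and> S2 \<in> LT T \<xi>2 \<xi>3 \<longrightarrow> S2 \<circ> S1 \<in> LT T \<xi>1 \<xi>3)
    \<and> (\<forall>S \<in> LT T \<xi>1 \<xi>2. \<exists>LS \<in> LT T (Lfilt \<xi>1) (Lfilt \<xi>2).
          \<forall>x \<in> Mr \<xi>1. LS (sshift x) = sshift (S x))"
proof (intro conjI allI impI ballI)
  show "S2 \<circ> S1 \<in> LT T \<xi>1 \<xi>3" if "S1 \<in> LT T \<xi>1 \<xi>2 \<and> S2 \<in> LT T \<xi>2 \<xi>3" for S1 S2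
    using that LT_comp by blast
next
  fix S assume S: "S \<in> LT T \<xi>1 \<xi>2"
  have OP1: "order_projection (\<xi>1 n)" and OP2: "order_projection (\<xi>2 n)" for n
    using forward_filtration_order_projection assms(3,5,6) by blast+
  show "\<exists>LS \<in> LT T (Lfilt \<xi>1) (Lfilt \<xi>2). \<forall>x \<in> Mr \<xi>1. LS (sshift x) = sshift (S x)"
  proof (intro bexI ballI)
    show "sshift \<circ> S \<circ> unshift \<xi>1 \<in> LT T (Lfilt \<xi>1) (Lfilt \<xi>2)"
      using unshift_in_LT[OF assms(1) OP1 assms(5,4)] S
        sshift_in_LT[of \<xi>2, OF order_projection_linear[OF OP2]]
      by (blast intro: LT_comp)
    show "(sshift \<circ> S \<circ> unshift \<xi>1) (sshift x) = sshift (S x)" if "x \<in> Mr \<xi>1" for x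
      using unshift_sshift[of \<xi>1, OF order_projection_linear[OF OP1] that] by simp
  qed
qed

end
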